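(* Let $c\in\mathbb{R}[t]$ be a polynomial of degree one, let $P,D\in\mathbb{H}[t]$ with $P\neq 0$, and let $M=c^2P+\varepsilon D\in\mathbb{DH}[t]$ be reduced, i.e. there is no $r\in\mathbb{R}[t]$ of positive degree and $M'\in\mathbb{DH}[t]$ with $M=rM'$. Then $M$ cannot be written as a product of polynomials of degree one in $\mathbb{DH}[t]$.
   Context: $\mathbb{D}=\mathbb{R}[\varepsilon]/\langle\varepsilon^2\rangle$ denotes the dual numbers. $\mathbb{H}$ denotes the real quaternions with basis $1,\mathbf{i},\mathbf{j},\mathbf{k}$, $\mathbf{i}^2=\mathbf{j}^2=\mathbf{k}^2=\mathbf{i}\mathbf{j}\mathbf{k}=-1$. The dual quaternions $\mathbb{DH}$ are $\mathbb{H}\otimes_{\mathbb{R}}\mathbb{D}$ ($\varepsilon$ central, $\varepsilon^2=0$). $\mathbb{DH}[t]$ is the polynomial ring with dual quaternion coefficients in which $t$ commutes with all coefficients; every element is $P+\varepsilon D$ with $P,D\in\mathbb{H}[t]$ (primal and dual part). *)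

theory Defs
  imports "HOL-Computational_Algebra.Polynomial"
begin

text \<open>Quaternion a + b i + c j + d k with i^2 = j^2 = k^2 = ijk = -1.\<close>

datatype quat = Quat (Re_q: real) (Im1: real) (Im2: real) (Im3: real)

instantiation quat :: comm_monoid_add
begin
definition zero_quat_def: "0 = Quat 0 0 0 0"
definition plus_quat_def:
  "x + y = Quat (Re_q x + Re_q y) (Im1 x + Im1 y) (Im2 x + Im2 y) (Im3 x + Im3 y)"
instance
  by standard (simp_all add: zero_quat_def plus_quat_def algebra_simps)
end

instantiation quat :: "{times, one}"
begin
definition one_quat_def: "1 = Quat 1 0 0 0"
definition times_quat_def:
  "x * y = Quat
     (Re_q x * Re_q y - Im1 x * Im1 y - Im2 x * Im2 y - Im3 x * Im3 y)
     (Re_q x * Im1 y + Im1 x * Re_q y + Im2 x * Im3 y - Im3 x * Im2 y)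
     (Re_q x * Im2 y - Im1 x * Im3 y + Im2 x * Re_q y + Im3 x * Im1 y)
     (Re_q x * Im3 y + Im1 x * Im2 y - Im2 x * Im1 y + Im3 x * Re_q y)"
instance ..
end

definition quat_of_real :: "real \<Rightarrow> quat" where
  "quat_of_real r = Quat r 0 0 0"

text \<open>The library multiplication on polynomials requires a commutative coefficient
  ring, so we define the (non-commutative) Cauchy product explicitly.\<close>

definition qpmult :: "quat poly \<Rightarrow> quat poly \<Rightarrow> quat poly" where
  "qpmult p q = (\<Sum>i\<le>degree p. \<Sum>j\<le>degree q. monom (coeff p i * coeff q j) (i + j))"

text \<open>An element P + eps D of DH[t] is represented by the pair (P, D) of its primal and
  dual part, P, D in H[t].\<close>

type_synonym dqpoly = "quat poly \<times> quat poly"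

definition dqmult :: "dqpoly \<Rightarrow> dqpoly \<Rightarrow> dqpoly" where
  "dqmult M N = (qpmult (fst M) (fst N), qpmult (fst M) (snd N) + qpmult (snd M) (fst N))"

definition dqone :: dqpoly where
  "dqone = ([:1:], 0)"

definition dqprod :: "dqpoly list \<Rightarrow> dqpoly" where
  "dqprod Fs = foldr dqmult Fs dqone"

definition dqdegree :: "dqpoly \<Rightarrow> nat" where
  "dqdegree M = max (degree (fst M)) (degree (snd M))"

definition qpoly_of_real :: "real poly \<Rightarrow> quat poly" where
  "qpoly_of_real r = map_poly quat_of_real r"

definition dq_of_real :: "real poly \<Rightarrow> dqpoly" where
  "dq_of_real r = (qpoly_of_real r, 0)"

text \<open>M is reduced: no real polynomial of positive degree is a (left) factor.
  Real polynomials are central, so left/right makes no difference.\<close>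
definition dq_reduced :: "dqpoly \<Rightarrow> bool" where
  "dq_reduced M \<longleftrightarrow> \<not> (\<exists>r M'. degree r > 0 \<and> M = dqmult (dq_of_real r) M')"

end

theory Submission
  imports Defs
begin

text \<open>Let \<open>x\<close> be the real root of \<open>c\<close>. The primal part \<open>c\<^sup>2 P\<close> vanishes to second order at \<open>x\<close>,
  whereas the primal part of a linear factor, a nonzero quaternion polynomial of degree at most
  one, has at most a simple root there. As the quaternions have no zero divisors, the Leibniz rule
  shows by induction over the factors that the dual part \<open>D\<close> of such a product vanishes at \<open>x\<close>
  too. But then \<open>t - x\<close> divides all eight real component polynomials of \<open>M\<close>, so \<open>M\<close> is not
  reduced.\<close>

definition quat_normsq :: "quat \<Rightarrow> real" where
  "quat_normsq q = (Re_q q)\<^sup>2 + (Im1 q)\<^sup>2 + (Im2 q)\<^sup>2 + (Im3 q)\<^sup>2"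

lemma quat_normsq_mult: "quat_normsq (a * b) = quat_normsq a * quat_normsq b"
  by (simp add: quat_normsq_def times_quat_def power2_eq_square algebra_simps)

lemma quat_normsq_eq_0_iff: "quat_normsq q = 0 \<longleftrightarrow> q = 0"
  by (cases q) (simp add: quat_normsq_def zero_quat_def add_nonneg_eq_0_iff)

lemma quat_mult_eq_0_iff: "(a::quat) * b = 0 \<longleftrightarrow> a = 0 \<or> b = 0"
  by (metis quat_normsq_eq_0_iff quat_normsq_mult mult_eq_0_iff)

lemma quat_components_zero [simp]: "Re_q 0 = 0" "Im1 0 = 0" "Im2 0 = 0" "Im3 0 = 0"
  by (simp_all add: zero_quat_def)

lemma quat_components_add [simp]:
  "Re_q (a + b) = Re_q a + Re_q b" "Im1 (a + b) = Im1 a + Im1 b"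
  "Im2 (a + b) = Im2 a + Im2 b" "Im3 (a + b) = Im3 a + Im3 b"
  by (simp_all add: plus_quat_def)

lemma quat_components_sum:
  "Re_q (sum f S) = (\<Sum>i\<in>S. Re_q (f i))" "Im1 (sum f S) = (\<Sum>i\<in>S. Im1 (f i))"
  "Im2 (sum f S) = (\<Sum>i\<in>S. Im2 (f i))" "Im3 (sum f S) = (\<Sum>i\<in>S. Im3 (f i))"
  by (induction S rule: infinite_finite_induct; simp)+

lemma quat_mult_zero [simp]: "(0::quat) * a = 0" "a * (0::quat) = 0"
  by (simp_all add: times_quat_def zero_quat_def)

definition qpoly_Re :: "quat poly \<Rightarrow> real poly" where "qpoly_Re p = map_poly Re_q p"
definition qpoly_Im1 :: "quat poly \<Rightarrow> real poly" where "qpoly_Im1 p = map_poly Im1 p"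
definition qpoly_Im2 :: "quat poly \<Rightarrow> real poly" where "qpoly_Im2 p = map_poly Im2 p"
definition qpoly_Im3 :: "quat poly \<Rightarrow> real poly" where "qpoly_Im3 p = map_poly Im3 p"

lemmas qpoly_components_defs = qpoly_Re_def qpoly_Im1_def qpoly_Im2_def qpoly_Im3_def

lemma coeff_qpoly_components [simp]:
  "coeff (qpoly_Re p) n = Re_q (coeff p n)" "coeff (qpoly_Im1 p) n = Im1 (coeff p n)"
  "coeff (qpoly_Im2 p) n = Im2 (coeff p n)" "coeff (qpoly_Im3 p) n = Im3 (coeff p n)"
  by (simp_all add: qpoly_components_defs coeff_map_poly)

lemma degree_qpoly_components_le:
  "degree (qpoly_Re p) \<le> degree p" "degree (qpoly_Im1 p) \<le> degree p"
  "degree (qpoly_Im2 p) \<le> degree p" "degree (qpoly_Im3 p) \<le> degree p"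
  by (auto intro!: degree_le simp: coeff_eq_0)

lemma qpoly_eqI:
  assumes "qpoly_Re p = qpoly_Re q" "qpoly_Im1 p = qpoly_Im1 q"
    and "qpoly_Im2 p = qpoly_Im2 q" "qpoly_Im3 p = qpoly_Im3 q"
  shows "p = q"
proof (rule poly_eqI)
  fix n
  show "coeff p n = coeff q n"
    using assms[THEN arg_cong, of "\<lambda>r. coeff r n"] by (simp add: quat.expand)
qed

lemma qpoly_components_zero [simp]:
  "qpoly_Re 0 = 0" "qpoly_Im1 0 = 0" "qpoly_Im2 0 = 0" "qpoly_Im3 0 = 0"
  by (rule poly_eqI; simp)+

lemma qpoly_components_one [simp]:
  "qpoly_Re [:1:] = 1" "qpoly_Im1 [:1:] = 0" "qpoly_Im2 [:1:] = 0" "qpoly_Im3 [:1:] = 0"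
  by (rule poly_eqI; simp add: one_quat_def coeff_pCons split: nat.splits)+

lemma qpoly_components_add [simp]:
  "qpoly_Re (p + q) = qpoly_Re p + qpoly_Re q" "qpoly_Im1 (p + q) = qpoly_Im1 p + qpoly_Im1 q"
  "qpoly_Im2 (p + q) = qpoly_Im2 p + qpoly_Im2 q" "qpoly_Im3 (p + q) = qpoly_Im3 p + qpoly_Im3 q"
  by (rule poly_eqI; simp)+

lemma qpoly_components_sum:
  "qpoly_Re (sum f S) = (\<Sum>i\<in>S. qpoly_Re (f i))" "qpoly_Im1 (sum f S) = (\<Sum>i\<in>S. qpoly_Im1 (f i))"
  "qpoly_Im2 (sum f S) = (\<Sum>i\<in>S. qpoly_Im2 (f i))" "qpoly_Im3 (sum f S) = (\<Sum>i\<in>S. qpoly_Im3 (f i))"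
  by (rule poly_eqI; simp add: coeff_sum quat_components_sum)+

lemma qpoly_components_monom [simp]:
  "qpoly_Re (monom a n) = monom (Re_q a) n" "qpoly_Im1 (monom a n) = monom (Im1 a) n"
  "qpoly_Im2 (monom a n) = monom (Im2 a) n" "qpoly_Im3 (monom a n) = monom (Im3 a) n"
  by (rule poly_eqI; simp)+

lemma qpoly_components_qpoly_of_real [simp]:
  "qpoly_Re (qpoly_of_real r) = r" "qpoly_Im1 (qpoly_of_real r) = 0"
  "qpoly_Im2 (qpoly_of_real r) = 0" "qpoly_Im3 (qpoly_of_real r) = 0"
  by (rule poly_eqI; simp add: qpoly_of_real_def coeff_map_poly quat_of_real_def zero_quat_def)+

lemma mult_poly_as_double_sum:
  fixes p q :: "'a::comm_semiring_1 poly"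
  assumes "degree p \<le> m" "degree q \<le> n"
  shows "p * q = (\<Sum>i\<le>m. \<Sum>j\<le>n. monom (coeff p i * coeff q j) (i + j))"
proof -
  have "p * q = (\<Sum>i\<le>m. monom (coeff p i) i) * (\<Sum>j\<le>n. monom (coeff q j) j)"
    using poly_as_sum_of_monoms'[OF assms(1)] poly_as_sum_of_monoms'[OF assms(2)] by simp
  then show ?thesis
    by (simp add: sum_product mult_monom)
qed

lemma qpoly_components_qpmult:
  "qpoly_Re (qpmult p q) = qpoly_Re p * qpoly_Re q - qpoly_Im1 p * qpoly_Im1 q
     - qpoly_Im2 p * qpoly_Im2 q - qpoly_Im3 p * qpoly_Im3 q"
  "qpoly_Im1 (qpmult p q) = qpoly_Re p * qpoly_Im1 q + qpoly_Im1 p * qpoly_Re q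
     + qpoly_Im2 p * qpoly_Im3 q - qpoly_Im3 p * qpoly_Im2 q"
  "qpoly_Im2 (qpmult p q) = qpoly_Re p * qpoly_Im2 q - qpoly_Im1 p * qpoly_Im3 q
     + qpoly_Im2 p * qpoly_Re q + qpoly_Im3 p * qpoly_Im1 q"
  "qpoly_Im3 (qpmult p q) = qpoly_Re p * qpoly_Im3 q + qpoly_Im1 p * qpoly_Im2 q
     - qpoly_Im2 p * qpoly_Im1 q + qpoly_Im3 p * qpoly_Re q"
  by (simp_all add: qpmult_def qpoly_components_sum times_quat_def degree_qpoly_components_le
      mult_poly_as_double_sum[where m = "degree p" and n = "degree q"]
      sum_subtractf sum.distrib add_monom[symmetric] diff_monom[symmetric])

lemma qpoly_components_qpmult_real [simp]:
  "qpoly_Re (qpmult (qpoly_of_real r) p) = r * qpoly_Re p"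
  "qpoly_Im1 (qpmult (qpoly_of_real r) p) = r * qpoly_Im1 p"
  "qpoly_Im2 (qpmult (qpoly_of_real r) p) = r * qpoly_Im2 p"
  "qpoly_Im3 (qpmult (qpoly_of_real r) p) = r * qpoly_Im3 p"
  by (simp_all add: qpoly_components_qpmult)

lemma qpmult_0 [simp]: "qpmult 0 q = 0" "qpmult p 0 = 0"
  by (rule qpoly_eqI; simp add: qpoly_components_qpmult)+

lemma qpmult_qpoly_of_real_eq_0_iff:
  "qpmult (qpoly_of_real r) p = 0 \<longleftrightarrow> r = 0 \<or> p = 0"
proof
  assume "qpmult (qpoly_of_real r) p = 0"
  then have "r * qpoly_Re p = 0" "r * qpoly_Im1 p = 0" "r * qpoly_Im2 p = 0" "r * qpoly_Im3 p = 0"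
    using qpoly_components_qpmult_real[of r p] by simp_all
  then show "r = 0 \<or> p = 0"
    by (auto intro: qpoly_eqI)
qed (auto simp: qpoly_of_real_def quat_of_real_def zero_quat_def[symmetric])

definition qpoly_of_components ::
    "real poly \<Rightarrow> real poly \<Rightarrow> real poly \<Rightarrow> real poly \<Rightarrow> quat poly" where
  "qpoly_of_components a b c d = map_poly (\<lambda>r. Quat r 0 0 0) a + map_poly (\<lambda>r. Quat 0 r 0 0) b
     + map_poly (\<lambda>r. Quat 0 0 r 0) c + map_poly (\<lambda>r. Quat 0 0 0 r) d"

lemma qpoly_components_of_components [simp]:
  "qpoly_Re (qpoly_of_components a b c d) = a" "qpoly_Im1 (qpoly_of_components a b c d) = b"
  "qpoly_Im2 (qpoly_of_components a b c d) = c" "qpoly_Im3 (qpoly_of_components a b c d) = d"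
  by (rule poly_eqI; simp add: qpoly_of_components_def coeff_map_poly zero_quat_def)+

definition qeval :: "quat poly \<Rightarrow> real \<Rightarrow> quat" where
  "qeval p x = Quat (poly (qpoly_Re p) x) (poly (qpoly_Im1 p) x) (poly (qpoly_Im2 p) x) (poly (qpoly_Im3 p) x)"

definition qderiv :: "quat poly \<Rightarrow> real \<Rightarrow> quat" where
  "qderiv p x = Quat (poly (pderiv (qpoly_Re p)) x) (poly (pderiv (qpoly_Im1 p)) x)
     (poly (pderiv (qpoly_Im2 p)) x) (poly (pderiv (qpoly_Im3 p)) x)"

lemma qeval_eq_0_iff:
  "qeval p x = 0 \<longleftrightarrow> poly (qpoly_Re p) x = 0 \<and> poly (qpoly_Im1 p) x = 0
     \<and> poly (qpoly_Im2 p) x = 0 \<and> poly (qpoly_Im3 p) x = 0"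
  by (simp add: qeval_def zero_quat_def)

lemma qeval_add: "qeval (p + q) x = qeval p x + qeval q x"
  by (simp add: qeval_def plus_quat_def)

lemma qeval_qpmult: "qeval (qpmult p q) x = qeval p x * qeval q x"
  by (simp add: qeval_def qpoly_components_qpmult times_quat_def)

lemma qderiv_qpmult: "qderiv (qpmult p q) x = qderiv p x * qeval q x + qeval p x * qderiv q x"
  by (simp add: qeval_def qderiv_def qpoly_components_qpmult times_quat_def plus_quat_def
      pderiv_mult pderiv_diff pderiv_add algebra_simps)

lemma qeval_one: "qeval [:1:] x = 1"
  by (simp add: qeval_def flip: one_quat_def)

lemma qeval_qpoly_of_real: "qeval (qpoly_of_real r) x = quat_of_real (poly r x)"
  by (simp add: qeval_def quat_of_real_def)

lemma qderiv_qpoly_of_real: "qderiv (qpoly_of_real r) x = quat_of_real (poly (pderiv r) x)"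
  by (simp add: qderiv_def quat_of_real_def)

lemma quat_of_real_0 [simp]: "quat_of_real 0 = 0"
  by (simp add: quat_of_real_def zero_quat_def)

lemma degree_le_1_poly_eq:
  fixes r :: "real poly"
  assumes "degree r \<le> 1"
  shows "r = [:coeff r 0, coeff r 1:]"
  by (rule poly_eqI) (use assms in \<open>auto simp: coeff_pCons coeff_eq_0 split: nat.splits\<close>)

lemma degree_le_1_double_root_eq_0:
  fixes r :: "real poly"
  assumes "degree r \<le> 1" "poly r x = 0" "poly (pderiv r) x = 0"
  shows "r = 0"
proof -
  obtain a b where "r = [:a, b:]"
    using degree_le_1_poly_eq[OF assms(1)] by blast
  with assms(2,3) show ?thesis
    by (simp add: pderiv_pCons)
qed

lemma qderiv_neq_0_at_root_of_linear:
  assumes "degree A \<le> 1" "A \<noteq> 0" "qeval A x = 0"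
  shows "qderiv A x \<noteq> 0"
proof
  assume "qderiv A x = 0"
  with assms(3) have "qpoly_Re A = 0" "qpoly_Im1 A = 0" "qpoly_Im2 A = 0" "qpoly_Im3 A = 0"
    using degree_qpoly_components_le[of A] assms(1)
    by (auto intro!: degree_le_1_double_root_eq_0[where x = x] simp: qeval_def qderiv_def zero_quat_def)
  then have "A = 0"
    by (auto intro: qpoly_eqI)
  with assms(2) show False ..
qed

lemma real_root_left_factor:
  assumes "qeval p x = 0"
  obtains q where "p = qpmult (qpoly_of_real [:-x, 1:]) q"
proof -
  from assms have "[:-x, 1:] dvd qpoly_Re p" "[:-x, 1:] dvd qpoly_Im1 p"
    "[:-x, 1:] dvd qpoly_Im2 p" "[:-x, 1:] dvd qpoly_Im3 p"
    by (simp_all add: qeval_eq_0_iff poly_eq_0_iff_dvd)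
  then obtain a b c d where "qpoly_Re p = [:-x, 1:] * a" "qpoly_Im1 p = [:-x, 1:] * b"
    "qpoly_Im2 p = [:-x, 1:] * c" "qpoly_Im3 p = [:-x, 1:] * d"
    by (elim dvdE)
  then have "p = qpmult (qpoly_of_real [:-x, 1:]) (qpoly_of_components a b c d)"
    by (auto intro: qpoly_eqI)
  then show ?thesis ..
qed

lemma dq_reduced_no_common_real_root:
  assumes "dq_reduced M" "qeval (fst M) x = 0"
  shows "qeval (snd M) x \<noteq> 0"
proof
  assume "qeval (snd M) x = 0"
  then obtain B where B: "snd M = qpmult (qpoly_of_real [:-x, 1:]) B"
    by (rule real_root_left_factor)
  obtain A where A: "fst M = qpmult (qpoly_of_real [:-x, 1:]) A"
    using assms(2) by (rule real_root_left_factor)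
  have "M = dqmult (dq_of_real [:-x, 1:]) (A, B)"
    by (simp add: dqmult_def dq_of_real_def prod_eq_iff A B)
  moreover have "degree [:-x, 1:] > 0"
    by simp
  ultimately show False
    using assms(1) unfolding dq_reduced_def by blast
qed

lemma degree_1_poly_has_root:
  fixes c :: "real poly"
  assumes "degree c = 1"
  obtains x where "poly c x = 0"
proof -
  obtain a b where c: "c = [:a, b:]"
    using degree_le_1_poly_eq assms by (metis order_refl)
  with assms have "b \<noteq> 0"
    by auto
  with c have "poly c (- a / b) = 0"
    by simp
  then show ?thesis ..
qed

lemma dqprod_Cons [simp]: "dqprod (F # Fs) = dqmult F (dqprod Fs)"
  by (simp add: dqprod_def)

lemma fst_dqprod_eq_0:
  assumes "F \<in> set Fs" "fst F = 0"
  shows "fst (dqprod Fs) = 0"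
  using assms by (induction Fs) (auto simp: dqmult_def)

lemma dual_part_vanishes_at_double_root:
  assumes "\<forall>F\<in>set Fs. qeval (fst F) x = 0 \<longrightarrow> qderiv (fst F) x \<noteq> 0"
    and "qeval (fst (dqprod Fs)) x = 0" and "qderiv (fst (dqprod Fs)) x = 0"
  shows "qeval (snd (dqprod Fs)) x = 0"
  using assms
proof (induction Fs)
  case Nil
  have "qeval (fst (dqprod [])) x = 1"
    by (simp add: dqprod_def dqone_def qeval_one)
  with Nil.prems(2) show ?case
    by (simp add: one_quat_def zero_quat_def)
next
  case (Cons F Fs)
  define a a' b where "a = qeval (fst F) x" and "a' = qderiv (fst F) x" and "b = qeval (snd F) x"
  define p p' s where "p = qeval (fst (dqprod Fs)) x" and "p' = qderiv (fst (dqprod Fs)) x"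
    and "s = qeval (snd (dqprod Fs)) x"
  have primal: "a * p = 0" and primal_deriv: "a' * p + a * p' = 0"
    using Cons.prems(2,3) by (simp_all add: dqmult_def qeval_qpmult qderiv_qpmult a_def a'_def p_def p'_def)
  have dual: "qeval (snd (dqprod (F # Fs))) x = a * s + b * p"
    by (simp add: dqmult_def qeval_qpmult qeval_add a_def b_def p_def s_def)
  txt \<open>If the first factor vanishes at \<open>x\<close>, its nonzero derivative forces the remaining
    product to vanish there; otherwise the remaining product has a double root at \<open>x\<close>.\<close>
  show ?case
  proof (cases "a = 0")
    case True
    with Cons.prems(1) have "a' \<noteq> 0"
      by (simp add: a_def a'_def)
    with True primal_deriv have "p = 0"
      by (simp add: quat_mult_eq_0_iff)
    with True dual show ?thesis
      by simp
  next
    case False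
    with primal primal_deriv have "p = 0" "p' = 0"
      by (simp_all add: quat_mult_eq_0_iff)
    with Cons.IH Cons.prems(1) have "s = 0"
      by (simp add: p_def p'_def s_def)
    with \<open>p = 0\<close> dual show ?thesis
      by simp
  qed
qed

lemma linear_factors_have_simple_roots:
  assumes "\<forall>F \<in> set Fs. dqdegree F = 1" "fst (dqprod Fs) \<noteq> 0"
  shows "\<forall>F\<in>set Fs. qeval (fst F) x = 0 \<longrightarrow> qderiv (fst F) x \<noteq> 0"
proof (intro ballI impI)
  fix F
  assume F: "F \<in> set Fs" "qeval (fst F) x = 0"
  have "degree (fst F) \<le> 1"
    using assms(1) F(1) by (auto simp: dqdegree_def)
  moreover have "fst F \<noteq> 0"
    using fst_dqprod_eq_0[OF F(1)] assms(2) by auto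
  ultimately show "qderiv (fst F) x \<noteq> 0"
    using F(2) by (rule qderiv_neq_0_at_root_of_linear)
qed

lemma qpmult_real_square_double_root:
  assumes "poly c x = 0"
  shows "qeval (qpmult (qpoly_of_real (c ^ 2)) P) x = 0"
    and "qderiv (qpmult (qpoly_of_real (c ^ 2)) P) x = 0"
  using assms by (simp_all add: qeval_qpmult qderiv_qpmult qeval_qpoly_of_real
      qderiv_qpoly_of_real pderiv_power)

theorem mainTheorem6:
  fixes c :: "real poly" and P D :: "quat poly"
  assumes "degree c = 1"
    and "P \<noteq> 0"
    and "dq_reduced (qpmult (qpoly_of_real (c ^ 2)) P, D)"
  shows "\<not> (\<exists>Fs. (\<forall>F \<in> set Fs. dqdegree F = 1) \<and>
                 dqprod Fs = (qpmult (qpoly_of_real (c ^ 2)) P, D))"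
proof
  assume "\<exists>Fs. (\<forall>F \<in> set Fs. dqdegree F = 1) \<and>
                 dqprod Fs = (qpmult (qpoly_of_real (c ^ 2)) P, D)"
  then obtain Fs where linear: "\<forall>F \<in> set Fs. dqdegree F = 1"
    and product: "dqprod Fs = (qpmult (qpoly_of_real (c ^ 2)) P, D)"
    by blast
  obtain x where root: "poly c x = 0"
    using assms(1) by (rule degree_1_poly_has_root)
  have "qpmult (qpoly_of_real (c ^ 2)) P \<noteq> 0"
    using assms(1,2) by (auto simp: qpmult_qpoly_of_real_eq_0_iff)
  with linear product have "\<forall>F\<in>set Fs. qeval (fst F) x = 0 \<longrightarrow> qderiv (fst F) x \<noteq> 0"
    by (intro linear_factors_have_simple_roots) simp_all
  then have "qeval D x = 0"
    using dual_part_vanishes_at_double_root[of Fs x] product qpmult_real_square_double_root[OF root]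
    by simp
  then show False
    using dq_reduced_no_common_real_root[OF assms(3)] qpmult_real_square_double_root(1)[OF root]
    by simp
qed

end
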